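(* Let $\psi^{(A)}$ and $\psi^{(B)}$ be neighbor functions and let $\sigma^{(A)},\sigma^{(B)}$ be positive numbers. Then $\psi^{(A)}$ and $\psi^{(B)}$ are continuously differentiable almost everywhere. Set $\sigma^*=1$ and define $\psi^*$ by $$\frac{d\psi^*(x)}{dx}=\max\left(\frac{1}{\sigma^{(A)}}\frac{d\psi^{(A)}(x)}{dx},\ \frac{1}{\sigma^{(B)}}\frac{d\psi^{(B)}(x)}{dx}\right),\qquad \psi^*(x)=\int_0^x\frac{d\psi^*(s)}{ds}\,ds.$$ Then $\psi^*$ is a neighbor function, and for every $x\geq 0$ we have $I_{\psi^{(A)},\sigma^{(A)}}(x)\supseteq I_{\psi^*,\sigma^*}(x)$ and $I_{\psi^{(B)},\sigma^{(B)}}(x)\supseteq I_{\psi^*,\sigma^*}(x)$.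
   Context: A neighbor function is a function $\psi:\mathbb{R}_{\geq 0}\to\mathbb{R}$ that is (i) strictly increasing, (ii) continuous, (iii) concave, and (iv) such that $g(x)=\psi(e^{x})$ is convex as a function of $x\in\mathbb{R}$. For a neighbor function $\psi$, a number $\sigma\geq 0$ and $y\geq 0$, the uncertainty interval around $y$ is $I_{\psi,\sigma}(y)=\big[\psi^{-1}(\max(\psi(0),\psi(y)-\sigma)),\ \psi^{-1}(\psi(y)+\sigma)\big]$. *)

theory Defs
  imports "HOL-Analysis.Analysis"
begin

definition neighbor_function :: "(real \<Rightarrow> real) \<Rightarrow> bool" where
  "neighbor_function \<psi> \<longleftrightarrow>
     strict_mono_on {0..} \<psi> \<and> continuous_on {0..} \<psi> \<and> concave_on {0..} \<psi> \<and>
     convex_on UNIV (\<lambda>x. \<psi> (exp x))"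

definition uncertainty_interval :: "(real \<Rightarrow> real) \<Rightarrow> real \<Rightarrow> real \<Rightarrow> real set" where
  "uncertainty_interval \<psi> \<sigma> y =
     {inv_into {0..} \<psi> (max (\<psi> 0) (\<psi> y - \<sigma>)) .. inv_into {0..} \<psi> (\<psi> y + \<sigma>)}"

definition C1_ae :: "(real \<Rightarrow> real) \<Rightarrow> bool" where
  "C1_ae \<psi> \<longleftrightarrow> (\<exists>N. N \<in> null_sets lborel \<and>
      (\<forall>x\<in>{0<..} - N. \<psi> differentiable at x) \<and> continuous_on ({0<..} - N) (deriv \<psi>))"

definition psi_star :: "(real \<Rightarrow> real) \<Rightarrow> real \<Rightarrow> (real \<Rightarrow> real) \<Rightarrow> real \<Rightarrow> real \<Rightarrow> real" where
  "psi_star \<psi>A \<sigma>A \<psi>B \<sigma>B x =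
     (LBINT s=0..x. max (deriv \<psi>A s / \<sigma>A) (deriv \<psi>B s / \<sigma>B))"

end

theory Submission
  imports Defs
begin

text \<open>A concave increasing \<open>\<psi>\<close> is the integral of its left derivative \<open>\<psi>'\<close>, which is positive
  and decreasing, continuous off the countable set of its jumps, and, because \<open>\<psi> \<circ> exp\<close> is
  convex, has \<open>s \<psi>'(s)\<close> nondecreasing. Conversely, \<open>x \<mapsto> \<integral>\<^sub>0\<^sup>x g\<close> is a neighbor function for
  every positive decreasing \<open>g\<close> with \<open>s g(s)\<close> nondecreasing. The integrand
  \<open>max (\<psi>\<^sub>A' / \<sigma>\<^sub>A) (\<psi>\<^sub>B' / \<sigma>\<^sub>B)\<close> of \<open>\<psi>*\<close> inherits these properties, and since it dominates
  \<open>\<psi>\<^sub>A' / \<sigma>\<^sub>A\<close>, \<open>\<psi>*\<close> grows on every \<open>[x, y]\<close> by at least \<open>(\<psi>\<^sub>A y - \<psi>\<^sub>A x) / \<sigma>\<^sub>A\<close>. Hence a unit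
  step on the \<open>\<psi>*\<close>-scale covers less distance than a step \<open>\<sigma>\<^sub>A\<close> on the \<open>\<psi>\<^sub>A\<close>-scale, which is the
  inclusion of the uncertainty intervals; likewise for \<open>B\<close>.\<close>

section \<open>Slopes of convex and concave functions\<close>

lemma convex_on_slope_mono:
  fixes f :: "real \<Rightarrow> real"
  assumes f: "convex_on I f" and I: "x \<in> I" "w \<in> I" and xyzw: "x < y" "y \<le> z" "z < w"
  shows "(f y - f x) / (y - x) \<le> (f w - f z) / (w - z)"
proof -
  have flip: "(a - b) / (c - d) = (b - a) / (d - c)" for a b c d :: real
    by (metis minus_diff_eq minus_divide_divide)
  have "(f y - f x) / (y - x) \<le> (f w - f y) / (w - y)"
    using convex_on_slope_le[OF f I, of y] xyzw by (simp add: flip)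
  also have "\<dots> \<le> (f w - f z) / (w - z)"
  proof (cases "y = z")
    case False
    have "y \<in> I"
      using atMostAtLeast_subset_convex[OF convex_on_imp_convex[OF f] I] xyzw by auto
    with False show ?thesis
      using convex_on_slope_le[OF f \<open>y \<in> I\<close> I(2), of z] xyzw by (simp add: flip)
  qed simp
  finally show ?thesis .
qed

lemma concave_on_slope_antimono:
  fixes f :: "real \<Rightarrow> real"
  assumes "concave_on I f" "x \<in> I" "w \<in> I" "x < y" "y \<le> z" "z < w"
  shows "(f w - f z) / (w - z) \<le> (f y - f x) / (y - x)"
  using convex_on_slope_mono[of I "\<lambda>x. - f x" x w y z] assms
  by (simp add: concave_on_def diff_divide_distrib)

lemma convex_on_slopesI:
  fixes f :: "real \<Rightarrow> real"
  assumes "convex I"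
    and slopes: "\<And>x y z. x \<in> I \<Longrightarrow> z \<in> I \<Longrightarrow> x < y \<Longrightarrow> y < z \<Longrightarrow>
                   (f y - f x) / (y - x) \<le> (f z - f y) / (z - y)"
  shows "convex_on I f"
proof (rule convex_on_linorderI)
  fix t x z :: real
  assume t: "0 < t" "t < 1" and xz: "x \<in> I" "z \<in> I" "x < z"
  define y where "y = (1 - t) * x + t * z"
  have yx: "y - x = t * (z - x)" and zy: "z - y = (1 - t) * (z - x)"
    by (simp_all add: y_def algebra_simps)
  have "0 < y - x" "0 < z - y"
    unfolding yx zy using t xz by simp_all
  then have "(f y - f x) / (y - x) \<le> (f z - f y) / (z - y)"
    by (intro slopes xz) simp_all
  then have "(f y - f x) / (t * (z - x)) \<le> (f z - f y) / ((1 - t) * (z - x))"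
    unfolding yx zy .
  then have "(f y - f x) * (1 - t) \<le> (f z - f y) * t"
    using t xz by (simp add: divide_simps)
  moreover have "(1 - t) *\<^sub>R x + t *\<^sub>R z = y"
    by (simp add: y_def)
  ultimately show "f ((1 - t) *\<^sub>R x + t *\<^sub>R z) \<le> (1 - t) * f x + t * f z"
    by (simp add: algebra_simps)
qed fact

lemma concave_on_slopesI:
  fixes f :: "real \<Rightarrow> real"
  assumes "convex I"
    and "\<And>x y z. x \<in> I \<Longrightarrow> z \<in> I \<Longrightarrow> x < y \<Longrightarrow> y < z \<Longrightarrow>
                   (f z - f y) / (z - y) \<le> (f y - f x) / (y - x)"
  shows "concave_on I f"
  unfolding concave_on_def
proof (rule convex_on_slopesI[OF assms(1)])
  fix x y z assume "x \<in> I" "z \<in> I" "x < y" "y < z"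
  from assms(2)[OF this] show "(- f y - - f x) / (y - x) \<le> (- f z - - f y) / (z - y)"
    by (simp add: diff_divide_distrib)
qed

lemma integral_Icc_diff:
  fixes g :: "real \<Rightarrow> real"
  assumes "g integrable_on {a..c}" "a \<le> b" "b \<le> c"
  shows "integral {a..c} g - integral {a..b} g = integral {b..c} g"
  using Henstock_Kurzweil_Integration.integral_combine[OF assms(2,3,1)] by simp

lemma has_integral_const_div:
  fixes K :: real
  assumes "0 < a" "a \<le> b"
  shows "((\<lambda>s. K / s) has_integral K * (ln b - ln a)) {a..b}"
proof -
  have "((\<lambda>s. K * ln s) has_real_derivative K / s) (at s within {a..b})" if "s \<in> {a..b}" for s
    using that assms by (auto intro!: derivative_eq_intros)
  then have "((\<lambda>s. K / s) has_integral K * ln b - K * ln a) {a..b}"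
    by (intro fundamental_theorem_of_calculus[OF assms(2)])
      (simp add: has_real_derivative_iff_has_vector_derivative)
  then show ?thesis
    by (simp add: right_diff_distrib)
qed

lemma integral_le_ln_diff:
  fixes g :: "real \<Rightarrow> real"
  assumes "g integrable_on {a..b}" "0 < a" "a \<le> b" and "\<And>s. a \<le> s \<Longrightarrow> s \<le> b \<Longrightarrow> s * g s \<le> K"
  shows "integral {a..b} g \<le> K * (ln b - ln a)"
proof -
  have "integral {a..b} g \<le> integral {a..b} (\<lambda>s. K / s)"
    using assms has_integral_const_div[OF assms(2,3), of K]
    by (intro integral_le) (auto simp: le_divide_eq mult.commute)
  then show ?thesis
    using has_integral_const_div[OF assms(2,3), of K] by (simp add: integral_unique)
qed

lemma integral_ge_ln_diff:
  fixes g :: "real \<Rightarrow> real"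
  assumes "g integrable_on {a..b}" "0 < a" "a \<le> b" and "\<And>s. a \<le> s \<Longrightarrow> s \<le> b \<Longrightarrow> K \<le> s * g s"
  shows "K * (ln b - ln a) \<le> integral {a..b} g"
proof -
  have "integral {a..b} (\<lambda>s. K / s) \<le> integral {a..b} g"
    using assms has_integral_const_div[OF assms(2,3), of K]
    by (intro integral_le) (auto simp: divide_le_eq mult.commute)
  then show ?thesis
    using has_integral_const_div[OF assms(2,3), of K] by (simp add: integral_unique)
qed

lemma integral_ge_const_Ioc:
  fixes u :: "real \<Rightarrow> real"
  assumes u: "u integrable_on {a..b}" and "a \<le> b"
    and lower: "\<And>s. a < s \<Longrightarrow> s \<le> b \<Longrightarrow> c \<le> u s"
  shows "c * (b - a) \<le> integral {a..b} u"
proof -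
  have "integral {a<..<b} (\<lambda>_. c) \<le> integral {a<..<b} u"
    using u lower by (intro integral_le) (auto simp: integrable_on_open_interval_real)
  then show ?thesis
    using \<open>a \<le> b\<close> by (simp add: integral_open_interval_real[symmetric] mult.commute)
qed

lemma interval_additive_telescope:
  fixes E :: "real \<Rightarrow> real \<Rightarrow> real" and \<phi> :: "real \<Rightarrow> real"
  assumes add: "\<And>p q. x \<le> p \<Longrightarrow> p \<le> q \<Longrightarrow> q \<le> y \<Longrightarrow> E x q = E x p + E p q"
    and bound: "\<And>p q. x \<le> p \<Longrightarrow> p \<le> q \<Longrightarrow> q \<le> y \<Longrightarrow> \<bar>E p q\<bar> \<le> (q - p) * (\<phi> p - \<phi> q)"
    and "0 \<le> h"
  shows "x + real n * h \<le> y \<Longrightarrow> \<bar>E x (x + real n * h)\<bar> \<le> h * (\<phi> x - \<phi> (x + real n * h))"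
proof (induction n)
  case 0
  then show ?case
    using bound[of x x] by simp
next
  case (Suc n)
  define p q where "p = x + real n * h" and "q = x + real (Suc n) * h"
  have pq: "x \<le> p" "p \<le> q" "q \<le> y" "q - p = h"
    using Suc.prems \<open>0 \<le> h\<close> by (auto simp: p_def q_def algebra_simps)
  have "\<bar>E x p\<bar> \<le> h * (\<phi> x - \<phi> p)"
    using Suc pq by (simp add: p_def)
  moreover have "\<bar>E p q\<bar> \<le> h * (\<phi> p - \<phi> q)"
    using bound[OF pq(1-3)] pq(4) by simp
  moreover have "\<bar>E x q\<bar> \<le> \<bar>E x p\<bar> + \<bar>E p q\<bar>"
    using add[OF pq(1-3)] by simp
  ultimately have "\<bar>E x q\<bar> \<le> h * (\<phi> x - \<phi> p) + h * (\<phi> p - \<phi> q)"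
    by linarith
  then show ?case
    by (simp add: q_def algebra_simps)
qed

lemma interval_additive_bounded_eq_0:
  fixes E :: "real \<Rightarrow> real \<Rightarrow> real" and \<phi> :: "real \<Rightarrow> real"
  assumes add: "\<And>p q. x \<le> p \<Longrightarrow> p \<le> q \<Longrightarrow> q \<le> y \<Longrightarrow> E x q = E x p + E p q"
    and bound: "\<And>p q. x \<le> p \<Longrightarrow> p \<le> q \<Longrightarrow> q \<le> y \<Longrightarrow> \<bar>E p q\<bar> \<le> (q - p) * (\<phi> p - \<phi> q)"
    and "x \<le> y"
  shows "E x y = 0"
proof -
  have "\<bar>E x y\<bar> \<le> (y - x) * (\<phi> x - \<phi> y) / real n" if "n \<ge> 1" for n :: nat
  proof -
    define h where "h = (y - x) / real n"
    have h: "0 \<le> h" "x + real n * h = y"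
      using that \<open>x \<le> y\<close> by (auto simp: h_def)
    have "\<bar>E x y\<bar> \<le> h * (\<phi> x - \<phi> y)"
      using interval_additive_telescope[OF add bound h(1), where n = n] h(2) by simp
    then show ?thesis
      by (simp add: h_def)
  qed
  then have "\<bar>E x y\<bar> \<le> 0"
    by (intro LIMSEQ_le_const[OF lim_const_over_n] exI[of _ 1]) auto
  then show ?thesis
    by simp
qed

lemma has_integral_Ioc_monotone_limit:
  fixes g :: "real \<Rightarrow> real" and c :: "nat \<Rightarrow> real"
  assumes c: "\<And>k. a < c k" "\<And>k. c k \<le> b" "\<And>k. c (Suc k) \<le> c k" and lim_c: "c \<longlonglongrightarrow> a"
    and nonneg: "\<And>s. a < s \<Longrightarrow> s \<le> b \<Longrightarrow> 0 \<le> g s"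
    and int: "\<And>k. (g has_integral I k) {c k..b}" and lim_I: "I \<longlonglongrightarrow> L"
  shows "(g has_integral L) {a<..b}"
proof -
  define h where "h k s = (if s \<in> {c k..} then g s else 0)" for k s
  have Ioc_Int: "{c k..} \<inter> {a<..b} = {c k..b}" for k
    using c(1)[of k] by auto
  have h_int: "h k integrable_on {a<..b}" for k
    unfolding h_def integrable_restrict_Int Ioc_Int using int by blast
  have integral_h: "integral {a<..b} (h k) = I k" for k
    unfolding h_def integral_restrict_Int Ioc_Int using int by blast
  have "g integrable_on {a<..b} \<and> (\<lambda>k. integral {a<..b} (h k)) \<longlonglongrightarrow> integral {a<..b} g"
  proof (rule monotone_convergence_increasing[OF h_int])
    show "h k s \<le> h (Suc k) s" if "s \<in> {a<..b}" for k s
      using c(3)[of k] nonneg[of s] that by (auto simp: h_def)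
    show "(\<lambda>k. h k s) \<longlonglongrightarrow> g s" if "s \<in> {a<..b}" for s
    proof (rule tendsto_eventually)
      have "\<forall>\<^sub>F k in sequentially. c k < s"
        using order_tendstoD(2)[OF lim_c, of s] that by simp
      then show "\<forall>\<^sub>F k in sequentially. h k s = g s"
        by eventually_elim (simp add: h_def)
    qed
    show "bounded (range (\<lambda>k. integral {a<..b} (h k)))"
      unfolding integral_h using lim_I by (rule convergent_imp_bounded)
  qed
  then show ?thesis
    using lim_I LIMSEQ_unique has_integral_integral unfolding integral_h by metis
qed

lemma has_integral_left_endpoint_nonneg:
  fixes g F :: "real \<Rightarrow> real"
  assumes "a \<le> b" and nonneg: "\<And>s. a < s \<Longrightarrow> s \<le> b \<Longrightarrow> 0 \<le> g s"
    and int: "\<And>c. a < c \<Longrightarrow> c \<le> b \<Longrightarrow> (g has_integral F b - F c) {c..b}"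
    and cont: "continuous_on {a..b} F"
  shows "(g has_integral F b - F a) {a..b}"
proof (cases "a = b")
  case False
  define c where "c k = a + (b - a) * inverse (real (Suc k))" for k
  have c: "a < c k" "c k \<le> b" "c (Suc k) \<le> c k" for k
    using \<open>a \<le> b\<close> False by (auto simp: c_def field_simps intro: mult_right_mono)
  have "c \<longlonglongrightarrow> a + (b - a) * 0"
    unfolding c_def by (intro tendsto_intros LIMSEQ_inverse_real_of_nat)
  then have lim_c: "c \<longlonglongrightarrow> a"
    by simp
  have "(\<lambda>k. F (c k)) \<longlonglongrightarrow> F a"
    using c \<open>a \<le> b\<close> by (intro continuous_on_tendsto_compose[OF cont lim_c] always_eventually)
      (auto intro: less_imp_le)
  then have "(\<lambda>k. F b - F (c k)) \<longlonglongrightarrow> F b - F a"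
    by (intro tendsto_intros)
  with c lim_c nonneg int have "(g has_integral F b - F a) {a<..b}"
    by (intro has_integral_Ioc_monotone_limit[of a c b]) auto
  then show ?thesis
    by (rule has_integral_spike_set_eq[THEN iffD1, rotated 2])
      (rule negligible_subset[of "{a}"]; auto)+
qed (simp add: has_integral_refl)

section \<open>The left derivative of a concave function\<close>

text \<open>For \<open>f\<close> concave on \<open>[0, \<infinity>)\<close> the difference quotients over \<open>[t, s]\<close> decrease as \<open>t\<close> increases
  to \<open>s\<close>, so the infimum is the left derivative at \<open>s > 0\<close>; the value \<open>0\<close> for \<open>s \<le> 0\<close> is junk.\<close>
definition left_deriv :: "(real \<Rightarrow> real) \<Rightarrow> real \<Rightarrow> real" where
  "left_deriv f s = (if 0 < s then (INF t\<in>{0<..<s}. (f s - f t) / (s - t)) else 0)"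

lemma left_deriv_le_slope:
  fixes f :: "real \<Rightarrow> real"
  assumes conc: "concave_on {0..} f" and "0 < a" "a < b"
  shows "left_deriv f b \<le> (f b - f a) / (b - a)"
proof -
  have "bdd_below ((\<lambda>t. (f b - f t) / (b - t)) ` {0<..<b})"
  proof (rule bdd_belowI2)
    fix t :: real assume "t \<in> {0<..<b}"
    then show "(f (b + 1) - f b) / (b + 1 - b) \<le> (f b - f t) / (b - t)"
      by (intro concave_on_slope_antimono[OF conc]) auto
  qed
  then show ?thesis
    using assms by (auto simp: left_deriv_def intro!: cINF_lower)
qed

lemma slope_le_left_deriv:
  fixes f :: "real \<Rightarrow> real"
  assumes conc: "concave_on {0..} f" and "0 < a" "a < b"
  shows "(f b - f a) / (b - a) \<le> left_deriv f a"
  unfolding left_deriv_def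
  using assms by (auto intro!: cINF_greatest concave_on_slope_antimono[OF conc])

lemma left_deriv_antimono:
  fixes f :: "real \<Rightarrow> real"
  assumes "concave_on {0..} f" "0 < a" "a \<le> b"
  shows "left_deriv f b \<le> left_deriv f a"
  using left_deriv_le_slope[OF assms(1), of a b] slope_le_left_deriv[OF assms(1), of a b] assms
  by (cases "a = b") auto

lemma left_deriv_pos:
  fixes f :: "real \<Rightarrow> real"
  assumes "concave_on {0..} f" "strict_mono_on {0..} f" "0 < s"
  shows "0 < left_deriv f s"
proof -
  have "0 < (f (s + 1) - f s) / (s + 1 - s)"
    using strict_mono_onD[OF assms(2), of s "s + 1"] assms(3) by simp
  also have "\<dots> \<le> left_deriv f s"
    using slope_le_left_deriv[OF assms(1), of s "s + 1"] assms(3) by simp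
  finally show ?thesis .
qed

lemma left_deriv_nonneg:
  fixes f :: "real \<Rightarrow> real"
  assumes "concave_on {0..} f" "mono_on {0..} f"
  shows "0 \<le> left_deriv f s"
proof (cases "0 < s")
  case True
  have "0 \<le> (f (s + 1) - f s) / (s + 1 - s)"
    using mono_onD[OF assms(2), of s "s + 1"] True by simp
  also have "\<dots> \<le> left_deriv f s"
    using slope_le_left_deriv[OF assms(1), of s "s + 1"] True by simp
  finally show ?thesis .
qed (simp add: left_deriv_def)

text \<open>Difference quotients of a concave function are squeezed between the left derivatives
  at the two ends, so continuity of the left derivative forces differentiability.\<close>
lemma has_real_derivative_left_deriv:
  fixes f :: "real \<Rightarrow> real"
  assumes conc: "concave_on {0..} f" and "0 < s" and cont: "isCont (left_deriv f) s"
  shows "(f has_real_derivative left_deriv f s) (at s)"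
  unfolding has_field_derivative_iff
proof (rule tendsto_sandwich)
  let ?D = "left_deriv f"
  have squeeze: "min (?D s) (?D y) \<le> (f y - f s) / (y - s) \<and> (f y - f s) / (y - s) \<le> max (?D s) (?D y)"
    if "0 < y" "y \<noteq> s" for y
  proof (cases "y < s")
    case True
    then have "(f y - f s) / (y - s) = (f s - f y) / (s - y)"
      by (simp add: field_simps)
    then show ?thesis
      using left_deriv_le_slope[OF conc, of y s] slope_le_left_deriv[OF conc, of y s] True that
      by auto
  next
    case False
    then show ?thesis
      using left_deriv_le_slope[OF conc, of s y] slope_le_left_deriv[OF conc, of s y] that \<open>0 < s\<close>
      by auto
  qed
  have "\<forall>\<^sub>F y in at s. 0 < y"
    using order_tendstoD(1)[OF tendsto_ident_at \<open>0 < s\<close>] .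
  moreover have "\<forall>\<^sub>F y in at s. y \<noteq> s"
    by (simp add: eventually_at_filter)
  ultimately have "\<forall>\<^sub>F y in at s. 0 < y \<and> y \<noteq> s"
    by (rule eventually_conj)
  then show "\<forall>\<^sub>F y in at s. min (?D s) (?D y) \<le> (f y - f s) / (y - s)"
    and "\<forall>\<^sub>F y in at s. (f y - f s) / (y - s) \<le> max (?D s) (?D y)"
    by (auto elim!: eventually_mono dest: squeeze)
  have "(?D \<longlongrightarrow> ?D s) (at s)"
    using cont by (simp add: isCont_def)
  then show "((\<lambda>y. min (?D s) (?D y)) \<longlongrightarrow> ?D s) (at s)"
    and "((\<lambda>y. max (?D s) (?D y)) \<longlongrightarrow> ?D s) (at s)"
    by (auto intro: tendsto_eq_intros)
qed

lemma countable_discontinuities_left_deriv: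
  fixes f :: "real \<Rightarrow> real"
  assumes "concave_on {0..} f"
  shows "countable {s \<in> {0<..}. \<not> isCont (left_deriv f) s}"
proof -
  have "mono_on {0<..} (\<lambda>s. - left_deriv f s)"
    using left_deriv_antimono[OF assms] by (auto intro!: mono_onI)
  then have "countable {s \<in> {0<..}. \<not> isCont (\<lambda>s. - left_deriv f s) s}"
    by (intro mono_on_ctble_discont_open) auto
  moreover have "{s \<in> {0<..}. \<not> isCont (left_deriv f) s}
      \<subseteq> {s \<in> {0<..}. \<not> isCont (\<lambda>s. - left_deriv f s) s}"
    by (auto dest: isCont_minus)
  ultimately show ?thesis
    by (rule countable_subset[rotated])
qed

lemma C1_ae_if_concave:
  fixes f :: "real \<Rightarrow> real"
  assumes "concave_on {0..} f"
  shows "C1_ae f"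
  unfolding C1_ae_def
proof (intro exI conjI ballI)
  let ?N = "{s \<in> {0<..}. \<not> isCont (left_deriv f) s}"
  show "?N \<in> null_sets lborel"
    using countable_discontinuities_left_deriv[OF assms] by (rule countable_imp_null_set_lborel)
  have deriv: "(f has_real_derivative left_deriv f s) (at s)" if "s \<in> {0<..} - ?N" for s
    using has_real_derivative_left_deriv[OF assms] that by auto
  then show "f differentiable at s" if "s \<in> {0<..} - ?N" for s
    using that real_differentiable_def by blast
  have "deriv f s = left_deriv f s" if "s \<in> {0<..} - ?N" for s
    using DERIV_imp_deriv[OF deriv[OF that]] .
  moreover have "continuous_on ({0<..} - ?N) (left_deriv f)"
    by (rule continuous_at_imp_continuous_on) auto
  ultimately show "continuous_on ({0<..} - ?N) (deriv f)"
    using continuous_on_cong[OF refl] by blast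
qed

lemma borel_measurable_left_deriv:
  fixes f :: "real \<Rightarrow> real"
  assumes "concave_on {0..} f"
  shows "left_deriv f \<in> borel_measurable borel"
proof -
  have "mono_on {..0} (\<lambda>s. - left_deriv f s)"
    by (rule mono_onI) (simp add: left_deriv_def)
  moreover have "mono_on {0<..} (\<lambda>s. - left_deriv f s)"
    using left_deriv_antimono[OF assms] by (auto intro!: mono_onI)
  ultimately have "(\<lambda>s. - left_deriv f s) \<in> borel_measurable borel"
    by (intro borel_measurable_piecewise_mono[of "{{..0}, {0<..}}"]) auto
  then show ?thesis
    by simp
qed

lemma integrable_left_deriv:
  fixes f :: "real \<Rightarrow> real"
  assumes "concave_on {0..} f" "0 < a"
  shows "left_deriv f integrable_on {a..b}"
proof -
  have "mono_on {a..b} (\<lambda>s. - left_deriv f s)"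
    using left_deriv_antimono[OF assms(1)] assms(2) by (auto intro!: mono_onI)
  then have "(\<lambda>s. - left_deriv f s) integrable_on {a..b}"
    by (rule integrable_on_mono_on)
  from integrable_neg[OF this] show ?thesis
    by simp
qed

text \<open>On \<open>[p, q]\<close> both the integral of the left derivative \<open>D\<close> and the increment \<open>f q - f p\<close>
  lie between \<open>(q - p) D q\<close> and \<open>(q - p) D p\<close>; over a uniform partition of \<open>[a, b]\<close> into \<open>n\<close>
  pieces these errors add up to at most \<open>(b - a) (D a - D b) / n\<close>.\<close>
lemma has_integral_left_deriv_pos:
  fixes f :: "real \<Rightarrow> real"
  assumes conc: "concave_on {0..} f" and "0 < a" "a \<le> b"
  shows "(left_deriv f has_integral f b - f a) {a..b}"
proof -
  let ?D = "left_deriv f"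
  define E where "E p q = integral {p..q} ?D - (f q - f p)" for p q
  have "E a b = 0"
  proof (rule interval_additive_bounded_eq_0[where E = E and \<phi> = ?D])
    show "E a q = E a p + E p q" if "a \<le> p" "p \<le> q" "q \<le> b" for p q
      using Henstock_Kurzweil_Integration.integral_combine[OF that(1,2)
          integrable_left_deriv[OF conc \<open>0 < a\<close>, of q]] by (simp add: E_def)
    show "\<bar>E p q\<bar> \<le> (q - p) * (?D p - ?D q)" if "a \<le> p" "p \<le> q" "q \<le> b" for p q
    proof (cases "p = q")
      case False
      have "0 < p" "p < q"
        using that False \<open>0 < a\<close> by auto
      have antimono: "?D q \<le> ?D s" "?D s \<le> ?D p" if "s \<in> {p..q}" for s
        using left_deriv_antimono[OF conc] that \<open>0 < p\<close> by auto
      have "integral {p..q} (\<lambda>_. ?D q) \<le> integral {p..q} ?D"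
        by (rule integral_le) (use antimono integrable_left_deriv[OF conc \<open>0 < p\<close>] in auto)
      moreover have "integral {p..q} ?D \<le> integral {p..q} (\<lambda>_. ?D p)"
        by (rule integral_le) (use antimono integrable_left_deriv[OF conc \<open>0 < p\<close>] in auto)
      moreover have "?D q \<le> (f q - f p) / (q - p)" "(f q - f p) / (q - p) \<le> ?D p"
        using left_deriv_le_slope[OF conc] slope_le_left_deriv[OF conc] \<open>0 < p\<close> \<open>p < q\<close>
        by auto
      moreover have "integral {p..q} (\<lambda>_. c) = (q - p) * c" for c
        using \<open>p < q\<close> by simp
      ultimately show ?thesis
        using \<open>p < q\<close> unfolding E_def by (simp add: abs_le_iff divide_simps algebra_simps)
    qed (simp add: E_def)
  qed fact
  then show ?thesis
    using integrable_left_deriv[OF conc \<open>0 < a\<close>] by (simp add: E_def has_integral_iff)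
qed

lemma has_integral_left_deriv:
  fixes f :: "real \<Rightarrow> real"
  assumes conc: "concave_on {0..} f" and "mono_on {0..} f" "continuous_on {0..} f"
    and "0 \<le> x" "x \<le> y"
  shows "(left_deriv f has_integral f y - f x) {x..y}"
proof (cases "x = 0")
  case True
  show ?thesis
    unfolding True
  proof (rule has_integral_left_endpoint_nonneg)
    show "0 \<le> left_deriv f s" for s
      using left_deriv_nonneg[OF conc assms(2)] .
    show "(left_deriv f has_integral f y - f c) {c..y}" if "0 < c" "c \<le> y" for c
      using has_integral_left_deriv_pos[OF conc that] .
    show "continuous_on {0..y} f"
      using assms(3) by (rule continuous_on_subset) auto
  qed (use assms True in simp)
next
  case False
  with assms show ?thesis
    by (intro has_integral_left_deriv_pos) auto
qed

text \<open>Since \<open>ln a - ln t \<le> (a - t) / t\<close> and \<open>(w - b) / w \<le> ln w - ln b\<close>, the slope of \<open>f \<circ> exp\<close>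
  over \<open>[ln t, ln a]\<close> is at least \<open>t\<close> times that of \<open>f\<close> over \<open>[t, a]\<close>, and over \<open>[ln b, ln w]\<close> at
  most \<open>w\<close> times that of \<open>f\<close> over \<open>[b, w]\<close>; convexity of \<open>f \<circ> exp\<close> orders the two slopes.\<close>
lemma mult_left_deriv_le_approx:
  fixes f :: "real \<Rightarrow> real"
  assumes conc: "concave_on {0..} f" and mono: "mono_on {0..} f"
    and cvx: "convex_on UNIV (\<lambda>u. f (exp u))"
    and t: "0 < t" "t < a" and "a \<le> b" and w: "b < w"
  shows "t * left_deriv f a \<le> w * left_deriv f b"
proof -
  have "t * left_deriv f a \<le> t * ((f a - f t) / (a - t))"
    using left_deriv_le_slope[OF conc t] t by (intro mult_left_mono) auto
  also have "\<dots> = (f a - f t) / ((a - t) / t)"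
    using t by simp
  also have "\<dots> \<le> (f a - f t) / (ln a - ln t)"
    using t mono_onD[OF mono, of t a] ln_diff_le[of a t] by (intro frac_le) auto
  also have "\<dots> = (f (exp (ln a)) - f (exp (ln t))) / (ln a - ln t)"
    using t by simp
  also have "\<dots> \<le> (f (exp (ln w)) - f (exp (ln b))) / (ln w - ln b)"
    using t w \<open>a \<le> b\<close> by (intro convex_on_slope_mono[OF cvx]) auto
  also have "\<dots> = (f w - f b) / (ln w - ln b)"
    using t w \<open>a \<le> b\<close> by simp
  also have "\<dots> \<le> (f w - f b) / ((w - b) / w)"
  proof (rule frac_le)
    show "0 \<le> f w - f b"
      using t w \<open>a \<le> b\<close> mono_onD[OF mono, of b w] by simp
    have "ln b - ln w \<le> (b - w) / w"
      using t w \<open>a \<le> b\<close> by (intro ln_diff_le) auto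
    then show "(w - b) / w \<le> ln w - ln b"
      by (simp add: diff_divide_distrib)
  qed (use t w \<open>a \<le> b\<close> in simp_all)
  also have "\<dots> = w * ((f w - f b) / (w - b))"
    using w by simp
  also have "\<dots> \<le> w * left_deriv f b"
    using slope_le_left_deriv[OF conc, of b w] t w \<open>a \<le> b\<close> by (intro mult_left_mono) auto
  finally show ?thesis .
qed

lemma mono_on_mult_left_deriv:
  fixes f :: "real \<Rightarrow> real"
  assumes conc: "concave_on {0..} f" and mono: "mono_on {0..} f"
    and cvx: "convex_on UNIV (\<lambda>u. f (exp u))"
  shows "mono_on {0<..} (\<lambda>s. s * left_deriv f s)"
proof (rule mono_onI)
  fix a b :: real
  assume ab: "a \<in> {0<..}" "b \<in> {0<..}" "a \<le> b"
  let ?D = "left_deriv f"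
  have "a * ?D a \<le> w * ?D b" if "b < w" for w
  proof (rule tendsto_le[OF trivial_limit_at_left_real])
    show "((\<lambda>t. t * ?D a) \<longlongrightarrow> a * ?D a) (at_left a)"
      by (intro tendsto_intros)
    have "\<forall>\<^sub>F t in at_left a. t \<in> {0<..<a}"
      using ab by (intro eventually_at_left_real) simp
    then show "\<forall>\<^sub>F t in at_left a. t * ?D a \<le> w * ?D b"
      by eventually_elim (use mult_left_deriv_le_approx[OF conc mono cvx] ab that in simp)
  qed simp
  then show "a * ?D a \<le> b * ?D b"
  proof (intro tendsto_le[OF trivial_limit_at_right_real])
    show "((\<lambda>w. w * ?D b) \<longlongrightarrow> b * ?D b) (at_right b)"
      by (intro tendsto_intros)
    have "\<forall>\<^sub>F w in at_right b. w \<in> {b<..<b + 1}"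
      by (intro eventually_at_right_real) simp
    then show "\<forall>\<^sub>F w in at_right b. a * ?D a \<le> w * ?D b"
      by eventually_elim (use \<open>\<And>w. b < w \<Longrightarrow> a * ?D a \<le> w * ?D b\<close> in simp)
  qed simp
qed

section \<open>Indefinite integrals that are neighbor functions\<close>

lemma concave_on_integral_antimono:
  fixes g :: "real \<Rightarrow> real"
  assumes int: "\<And>x. 0 \<le> x \<Longrightarrow> g integrable_on {0..x}"
    and anti: "antimono_on {0<..} g"
  shows "concave_on {0..} (\<lambda>x. integral {0..x} g)"
proof (rule concave_on_slopesI)
  fix x y z :: real
  assume xz: "x \<in> {0..}" "z \<in> {0..}" "x < y" "y < z"
  have g_le: "g t \<le> g s" if "x < s" "s \<le> t" for s t
    using that xz by (intro monotone_onD[OF anti]) auto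
  have "integral {0..z} g - integral {0..y} g = integral {y..z} g"
    using xz by (intro integral_Icc_diff int) auto
  also have "\<dots> \<le> integral {y..z} (\<lambda>_. g y)"
    using xz g_le by (intro integral_le integrable_subinterval_real[OF int[of z]]) auto
  finally have up: "(integral {0..z} g - integral {0..y} g) / (z - y) \<le> g y"
    using xz by (simp add: divide_le_eq mult.commute)
  have "g y * (y - x) \<le> integral {x..y} g"
    using xz g_le by (intro integral_ge_const_Ioc integrable_subinterval_real[OF int[of z]]) auto
  also have "\<dots> = integral {0..y} g - integral {0..x} g"
    using xz by (intro integral_Icc_diff[symmetric] int) auto
  finally have "g y \<le> (integral {0..y} g - integral {0..x} g) / (y - x)"
    using xz by (simp add: le_divide_eq)
  with up show "(integral {0..z} g - integral {0..y} g) / (z - y)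
      \<le> (integral {0..y} g - integral {0..x} g) / (y - x)"
    by (rule order_trans)
qed simp

lemma convex_on_integral_exp:
  fixes g :: "real \<Rightarrow> real"
  assumes int: "\<And>x. 0 \<le> x \<Longrightarrow> g integrable_on {0..x}"
    and mono: "mono_on {0<..} (\<lambda>s. s * g s)"
  shows "convex_on UNIV (\<lambda>u. integral {0..exp u} g)"
proof (rule convex_on_slopesI)
  fix u v w :: real
  assume uvw: "u < v" "v < w"
  define K where "K = exp v * g (exp v)"
  have int_pos: "g integrable_on {a..b}" if "0 < a" "a \<le> b" for a b
    using that by (intro integrable_subinterval_real[OF int[of b]]) auto
  have mono': "s * g s \<le> t * g t" if "0 < s" "s \<le> t" for s t
    using that by (intro mono_onD[OF mono]) auto
  have "integral {0..exp v} g - integral {0..exp u} g = integral {exp u..exp v} g"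
    using uvw by (intro integral_Icc_diff int) auto
  also have "\<dots> \<le> K * (ln (exp v) - ln (exp u))"
    using uvw int_pos
    by (intro integral_le_ln_diff) (auto simp: K_def intro!: mono' less_le_trans[OF exp_gt_zero[of u]])
  finally have left: "(integral {0..exp v} g - integral {0..exp u} g) / (v - u) \<le> K"
    using uvw by (simp add: divide_le_eq)
  have "K * (ln (exp w) - ln (exp v)) \<le> integral {exp v..exp w} g"
    using uvw int_pos by (intro integral_ge_ln_diff) (auto simp: K_def intro!: mono')
  then have "K * (w - v) \<le> integral {exp v..exp w} g"
    by simp
  also have "\<dots> = integral {0..exp w} g - integral {0..exp v} g"
    using uvw by (intro integral_Icc_diff[symmetric] int) auto
  finally have "K \<le> (integral {0..exp w} g - integral {0..exp v} g) / (w - v)"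
    using uvw by (simp add: le_divide_eq)
  with left show "(integral {0..exp v} g - integral {0..exp u} g) / (v - u)
      \<le> (integral {0..exp w} g - integral {0..exp v} g) / (w - v)"
    by (rule order_trans)
qed simp

lemma continuous_on_integral_from_0:
  fixes g :: "real \<Rightarrow> real"
  assumes int: "\<And>x. 0 \<le> x \<Longrightarrow> g integrable_on {0..x}"
  shows "continuous_on {0..} (\<lambda>x. integral {0..x} g)"
  unfolding continuous_on_eq_continuous_within
proof
  fix x :: real
  assume "x \<in> {0..}"
  then have "continuous (at x within {0..x + 1}) (\<lambda>x. integral {0..x} g)"
    using indefinite_integral_continuous_1[OF int[of "x + 1"]]
    by (simp add: continuous_on_eq_continuous_within)
  moreover have "at x within {0..} = at x within {0..x + 1}"
    by (rule at_within_nhd[of _ "{..<x + 1}"]) auto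
  ultimately show "continuous (at x within {0..}) (\<lambda>x. integral {0..x} g)"
    by simp
qed

lemma neighbor_function_integral:
  fixes g :: "real \<Rightarrow> real"
  assumes int: "\<And>x. 0 \<le> x \<Longrightarrow> g integrable_on {0..x}"
    and pos: "\<And>s. 0 < s \<Longrightarrow> 0 < g s"
    and anti: "antimono_on {0<..} g"
    and mono: "mono_on {0<..} (\<lambda>s. s * g s)"
  shows "neighbor_function (\<lambda>x. integral {0..x} g)"
  unfolding neighbor_function_def
proof (intro conjI concave_on_integral_antimono convex_on_integral_exp
    continuous_on_integral_from_0 int anti mono)
  show "strict_mono_on {0..} (\<lambda>x. integral {0..x} g)"
  proof (rule strict_mono_onI)
    fix x y :: real
    assume xy: "x \<in> {0..}" "y \<in> {0..}" "x < y"
    have "0 < g y * (y - x)"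
      using xy pos[of y] by simp
    also have "\<dots> \<le> integral {x..y} g"
      using xy by (intro integral_ge_const_Ioc integrable_subinterval_real[OF int[of y]]
          monotone_onD[OF anti]) auto
    also have "\<dots> = integral {0..y} g - integral {0..x} g"
      using xy by (intro integral_Icc_diff[symmetric] int) auto
    finally show "integral {0..x} g < integral {0..y} g"
      by simp
  qed
qed

section \<open>Range and uncertainty intervals of neighbor functions\<close>

lemma neighbor_function_unbounded:
  fixes f :: "real \<Rightarrow> real"
  assumes "neighbor_function f"
  obtains y where "0 \<le> y" "v \<le> f y"
proof -
  define G where "G u = f (exp u)" for u
  have cvx: "convex_on UNIV G" and "f 1 < f (exp 1)"
    using assms by (auto simp: neighbor_function_def G_def[abs_def] strict_mono_on_def)
  then have d: "0 < G 1 - G 0"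
    by (simp add: G_def)
  have grow: "G 1 + (u - 1) * (G 1 - G 0) \<le> G u" if "1 < u" for u
  proof -
    have "(G 1 - G 0) / (1 - 0) \<le> (G u - G 1) / (u - 1)"
      using that by (intro convex_on_slope_mono[OF cvx]) auto
    then show ?thesis
      using that by (simp add: le_divide_eq mult.commute)
  qed
  define u where "u = 2 + \<bar>v - G 1\<bar> / (G 1 - G 0)"
  have "v \<le> G 1 + (u - 1) * (G 1 - G 0)"
    using d by (simp add: u_def distrib_right)
  also have "\<dots> \<le> G u"
    using d by (intro grow) (simp add: u_def add_pos_nonneg)
  finally show ?thesis
    by (intro that[of "exp u"]) (simp_all add: G_def)
qed

lemma neighbor_function_image:
  fixes f :: "real \<Rightarrow> real"
  assumes "neighbor_function f"
  shows "f ` {0..} = {f 0..}"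
proof
  have mono: "strict_mono_on {0..} f" and cont: "continuous_on {0..} f"
    using assms by (simp_all add: neighbor_function_def)
  show "f ` {0..} \<subseteq> {f 0..}"
    using strict_mono_on_leD[OF mono] by auto
  show "{f 0..} \<subseteq> f ` {0..}"
  proof
    fix v assume "v \<in> {f 0..}"
    obtain y where "0 \<le> y" "v \<le> f y"
      using neighbor_function_unbounded[OF assms] .
    moreover have "continuous_on {0..y} f"
      using cont by (rule continuous_on_subset) auto
    ultimately obtain s where "0 \<le> s" "s \<le> y" "f s = v"
      using IVT'[of f 0 v y] \<open>v \<in> {f 0..}\<close> by auto
    then show "v \<in> f ` {0..}"
      by auto
  qed
qed

lemma inv_into_ray:
  fixes f :: "real \<Rightarrow> real"
  assumes "f ` {0..} = {f 0..}" "f 0 \<le> v"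
  shows "0 \<le> inv_into {0..} f v" "f (inv_into {0..} f v) = v"
  using inv_into_into[of v f "{0..}"] f_inv_into_f[of v f "{0..}"] assms by auto

lemma le_inv_into_ray:
  fixes f :: "real \<Rightarrow> real"
  assumes "strict_mono_on {0..} f" "f ` {0..} = {f 0..}" "0 \<le> s" "f s \<le> v"
  shows "s \<le> inv_into {0..} f v"
proof -
  have "f 0 \<le> v"
    using strict_mono_on_leD[OF assms(1), of 0 s] assms(3,4) by simp
  then have "0 \<le> inv_into {0..} f v" "f s \<le> f (inv_into {0..} f v)"
    using inv_into_ray[OF assms(2)] assms(4) by simp_all
  then show ?thesis
    using strict_mono_on_less_eq[OF assms(1), of s] assms(3) by simp
qed

lemma uncertainty_interval_subset:
  fixes \<phi> \<psi> :: "real \<Rightarrow> real"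
  assumes \<phi>: "strict_mono_on {0..} \<phi>" "\<phi> ` {0..} = {\<phi> 0..}"
    and \<psi>: "strict_mono_on {0..} \<psi>" "\<psi> ` {0..} = {\<psi> 0..}"
    and "0 < \<sigma>" "0 < \<tau>"
    and slower: "\<And>x y. 0 \<le> x \<Longrightarrow> x \<le> y \<Longrightarrow> (\<psi> y - \<psi> x) / \<sigma> \<le> (\<phi> y - \<phi> x) / \<tau>"
    and "0 \<le> x"
  shows "uncertainty_interval \<phi> \<tau> x \<subseteq> uncertainty_interval \<psi> \<sigma> x"
proof -
  have "\<phi> 0 \<le> \<phi> x" "\<psi> 0 \<le> \<psi> x"
    using strict_mono_on_leD[OF \<phi>(1)] strict_mono_on_leD[OF \<psi>(1)] \<open>0 \<le> x\<close> by auto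
  define s t where "s = inv_into {0..} \<phi> (\<phi> x + \<tau>)"
    and "t = inv_into {0..} \<psi> (max (\<psi> 0) (\<psi> x - \<sigma>))"
  have s: "0 \<le> s" "\<phi> s = \<phi> x + \<tau>" and t: "0 \<le> t" "\<psi> t = max (\<psi> 0) (\<psi> x - \<sigma>)"
    unfolding s_def t_def using \<open>\<phi> 0 \<le> \<phi> x\<close> \<open>0 < \<tau>\<close> by (auto intro!: inv_into_ray \<phi>(2) \<psi>(2))
  have "s \<le> inv_into {0..} \<psi> (\<psi> x + \<sigma>)"
  proof (rule le_inv_into_ray[OF \<psi> s(1)])
    have "x \<le> s"
      using strict_mono_on_less_eq[OF \<phi>(1), of s x] s \<open>0 \<le> x\<close> \<open>0 < \<tau>\<close> by auto
    then show "\<psi> s \<le> \<psi> x + \<sigma>"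
      using slower[OF \<open>0 \<le> x\<close>, of s] s(2) \<open>0 < \<sigma>\<close> \<open>0 < \<tau>\<close> by (simp add: divide_le_eq)
  qed
  moreover have "t \<le> inv_into {0..} \<phi> (max (\<phi> 0) (\<phi> x - \<tau>))"
  proof (rule le_inv_into_ray[OF \<phi> t(1)])
    show "\<phi> t \<le> max (\<phi> 0) (\<phi> x - \<tau>)"
    proof (cases "\<psi> x - \<sigma> \<le> \<psi> 0")
      case True
      then show ?thesis
        using t strict_mono_on_eqD[OF \<psi>(1), of t 0] by auto
    next
      case False
      then have "t \<le> x"
        using t strict_mono_on_less_eq[OF \<psi>(1), of t x] \<open>0 \<le> x\<close> \<open>0 < \<sigma>\<close> by auto
      then have "(\<psi> x - \<psi> t) / \<sigma> \<le> (\<phi> x - \<phi> t) / \<tau>"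
        using slower t(1) by blast
      then show ?thesis
        using False t(2) \<open>0 < \<sigma>\<close> \<open>0 < \<tau>\<close> by (simp add: le_divide_eq)
    qed
  qed
  ultimately show ?thesis
    by (simp add: uncertainty_interval_def s_def t_def)
qed

section \<open>The combined neighbor function \<open>\<psi>*\<close>\<close>

lemma neighbor_function_cong:
  fixes f g :: "real \<Rightarrow> real"
  assumes "\<And>x. 0 \<le> x \<Longrightarrow> f x = g x"
  shows "neighbor_function f \<longleftrightarrow> neighbor_function g"
proof -
  have "strict_mono_on {0..} f \<longleftrightarrow> strict_mono_on {0..} g"
    by (simp add: strict_mono_on_def assms)
  moreover have "continuous_on {0..} f \<longleftrightarrow> continuous_on {0..} g"
    by (rule continuous_on_cong) (simp_all add: assms)
  moreover have "concave_on {0..} f \<longleftrightarrow> concave_on {0..} g"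
    by (simp add: concave_on_def convex_on_def assms add_nonneg_nonneg)
  moreover have "(\<lambda>x. f (exp x)) = (\<lambda>x. g (exp x))"
    by (simp add: assms)
  ultimately show ?thesis
    by (simp add: neighbor_function_def)
qed

lemma neighbor_function_has_integral_left_deriv:
  fixes f :: "real \<Rightarrow> real"
  assumes "neighbor_function f" "0 \<le> x" "x \<le> y"
  shows "(left_deriv f has_integral f y - f x) {x..y}"
  using assms
  by (intro has_integral_left_deriv strict_mono_on_imp_mono_on) (auto simp: neighbor_function_def)

text \<open>The density \<open>d\<psi>*/dx\<close> with \<open>left_deriv\<close> in place of \<open>deriv\<close>; the two differ on a countable
  set only, so this does not change \<open>\<psi>*\<close> (\<open>psi_star_eq_integral\<close>).\<close>
definition psi_star_integrand :: "(real \<Rightarrow> real) \<Rightarrow> real \<Rightarrow> (real \<Rightarrow> real) \<Rightarrow> real \<Rightarrow> real \<Rightarrow> real"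
  where "psi_star_integrand \<psi>A \<sigma>A \<psi>B \<sigma>B s = max (left_deriv \<psi>A s / \<sigma>A) (left_deriv \<psi>B s / \<sigma>B)"

lemma psi_star_integrand_absolutely_integrable:
  fixes \<psi>A \<psi>B :: "real \<Rightarrow> real"
  assumes "neighbor_function \<psi>A" "neighbor_function \<psi>B" "0 < \<sigma>A" "0 < \<sigma>B" "0 \<le> x" "x \<le> y"
  shows "psi_star_integrand \<psi>A \<sigma>A \<psi>B \<sigma>B absolutely_integrable_on {x..y}"
proof -
  have "(\<lambda>s. left_deriv \<psi> s / \<sigma>) absolutely_integrable_on {x..y}"
    if "neighbor_function \<psi>" "0 < \<sigma>" for \<psi> :: "real \<Rightarrow> real" and \<sigma> :: real
  proof (rule nonnegative_absolutely_integrable_1)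
    show "(\<lambda>s. left_deriv \<psi> s / \<sigma>) integrable_on {x..y}"
      using has_integral_divide[OF neighbor_function_has_integral_left_deriv[OF that(1) assms(5,6)]]
      by blast
    show "0 \<le> left_deriv \<psi> s / \<sigma>" for s
      using that left_deriv_nonneg[of \<psi>]
      by (simp add: neighbor_function_def strict_mono_on_imp_mono_on)
  qed
  from absolutely_integrable_max[OF this[OF assms(1,3)] this[OF assms(2,4)]] show ?thesis
    by (simp add: psi_star_integrand_def[abs_def])
qed

lemma set_integrable_psi_star_integrand:
  fixes \<psi>A \<psi>B :: "real \<Rightarrow> real"
  assumes A: "neighbor_function \<psi>A" and B: "neighbor_function \<psi>B" and "0 < \<sigma>A" "0 < \<sigma>B"
    and "0 \<le> x"
  shows "set_integrable lborel {0..x} (psi_star_integrand \<psi>A \<sigma>A \<psi>B \<sigma>B)"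
proof -
  let ?g = "psi_star_integrand \<psi>A \<sigma>A \<psi>B \<sigma>B"
  have "left_deriv \<psi>A \<in> borel_measurable borel" "left_deriv \<psi>B \<in> borel_measurable borel"
    using A B by (simp_all add: borel_measurable_left_deriv neighbor_function_def)
  then have "?g \<in> borel_measurable borel"
    unfolding psi_star_integrand_def[abs_def] by measurable
  then have "(\<lambda>s. indicator {0..x} s *\<^sub>R ?g s) \<in> borel_measurable lborel"
    by (intro borel_measurable_scaleR borel_measurable_indicator) simp_all
  moreover have "integrable lebesgue (\<lambda>s. indicator {0..x} s *\<^sub>R ?g s)"
    using psi_star_integrand_absolutely_integrable[OF A B assms(3,4) order_refl assms(5)]
    unfolding set_integrable_def .
  ultimately show ?thesis
    unfolding set_integrable_def by (rule integrable_completion[THEN iffD1])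
qed

lemma psi_star_eq_integral:
  fixes \<psi>A \<psi>B :: "real \<Rightarrow> real"
  assumes A: "neighbor_function \<psi>A" and B: "neighbor_function \<psi>B" and "0 < \<sigma>A" "0 < \<sigma>B"
    and "0 \<le> x"
  shows "psi_star \<psi>A \<sigma>A \<psi>B \<sigma>B x = integral {0..x} (psi_star_integrand \<psi>A \<sigma>A \<psi>B \<sigma>B)"
proof -
  let ?g = "psi_star_integrand \<psi>A \<sigma>A \<psi>B \<sigma>B"
  let ?h = "\<lambda>s. max (deriv \<psi>A s / \<sigma>A) (deriv \<psi>B s / \<sigma>B)"
  have conc: "concave_on {0..} \<psi>A" "concave_on {0..} \<psi>B"
    using A B by (simp_all add: neighbor_function_def)
  define N where "N = {s \<in> {0<..}. \<not> isCont (left_deriv \<psi>A) s} \<union> {s \<in> {0<..}. \<not> isCont (left_deriv \<psi>B) s}"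
  have "countable N"
    using countable_discontinuities_left_deriv[OF conc(1)] countable_discontinuities_left_deriv[OF conc(2)]
    by (simp add: N_def)
  have "?h s = ?g s" if "0 < s" "s \<notin> N" for s
    using that DERIV_imp_deriv[OF has_real_derivative_left_deriv[OF conc(1)]]
      DERIV_imp_deriv[OF has_real_derivative_left_deriv[OF conc(2)]]
    by (simp add: N_def psi_star_integrand_def)
  then have "(LINT s|lborel. indicator {0<..<x} s *\<^sub>R ?h s) = (LINT s|lborel. indicator {0<..<x} s *\<^sub>R ?g s)"
    by (intro integral_discrete_difference[OF \<open>countable N\<close>]) (auto simp: indicator_def)
  moreover have "einterval 0 (ereal x) = {0<..<x}"
    by (auto simp: einterval_def)
  ultimately have "psi_star \<psi>A \<sigma>A \<psi>B \<sigma>B x = (LBINT s=0..x. ?g s)"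
    using \<open>0 \<le> x\<close> by (simp add: psi_star_def interval_lebesgue_integral_def set_lebesgue_integral_def)
  also have "\<dots> = integral {0..x} ?g"
    using interval_integral_eq_integral[OF \<open>0 \<le> x\<close> set_integrable_psi_star_integrand[OF assms]]
    by (metis zero_ereal_def)
  finally show ?thesis .
qed

lemma psi_star_integrand_pos:
  fixes \<psi>A \<psi>B :: "real \<Rightarrow> real"
  assumes "neighbor_function \<psi>A" "0 < \<sigma>A" "0 < s"
  shows "0 < psi_star_integrand \<psi>A \<sigma>A \<psi>B \<sigma>B s"
  using assms left_deriv_pos[of \<psi>A s]
  by (simp add: psi_star_integrand_def less_max_iff_disj neighbor_function_def)

lemma antimono_psi_star_integrand:
  fixes \<psi>A \<psi>B :: "real \<Rightarrow> real"
  assumes "concave_on {0..} \<psi>A" "concave_on {0..} \<psi>B" "0 < \<sigma>A" "0 < \<sigma>B"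
  shows "antimono_on {0<..} (psi_star_integrand \<psi>A \<sigma>A \<psi>B \<sigma>B)"
proof (rule monotone_onI)
  fix r t :: real
  assume "r \<in> {0<..}" "r \<le> t"
  then show "psi_star_integrand \<psi>A \<sigma>A \<psi>B \<sigma>B t \<le> psi_star_integrand \<psi>A \<sigma>A \<psi>B \<sigma>B r"
    using left_deriv_antimono[OF assms(1), of r t] left_deriv_antimono[OF assms(2), of r t] assms(3,4)
    unfolding psi_star_integrand_def by (intro max.mono divide_right_mono) auto
qed

lemma mono_on_mult_psi_star_integrand:
  fixes \<psi>A \<psi>B :: "real \<Rightarrow> real"
  assumes "neighbor_function \<psi>A" "neighbor_function \<psi>B" "0 < \<sigma>A" "0 < \<sigma>B"
  shows "mono_on {0<..} (\<lambda>s. s * psi_star_integrand \<psi>A \<sigma>A \<psi>B \<sigma>B s)"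
proof (rule mono_onI)
  fix r t :: real
  assume rt: "r \<in> {0<..}" "t \<in> {0<..}" "r \<le> t"
  have "r * left_deriv \<psi> r / \<sigma> \<le> t * left_deriv \<psi> t / \<sigma>"
    if "neighbor_function \<psi>" "0 < \<sigma>" for \<psi> :: "real \<Rightarrow> real" and \<sigma> :: real
  proof -
    have "mono_on {0<..} (\<lambda>s. s * left_deriv \<psi> s)"
      using that(1) by (intro mono_on_mult_left_deriv)
        (simp_all add: neighbor_function_def strict_mono_on_imp_mono_on)
    then have "r * left_deriv \<psi> r \<le> t * left_deriv \<psi> t"
      using mono_onD[of "{0<..}" _ r t] rt by simp
    then show ?thesis
      using that(2) by (intro divide_right_mono) auto
  qed
  from this[OF assms(1,3)] this[OF assms(2,4)]
  have "max (r * left_deriv \<psi>A r / \<sigma>A) (r * left_deriv \<psi>B r / \<sigma>B)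
      \<le> max (t * left_deriv \<psi>A t / \<sigma>A) (t * left_deriv \<psi>B t / \<sigma>B)"
    by (rule max.mono)
  then show "r * psi_star_integrand \<psi>A \<sigma>A \<psi>B \<sigma>B r \<le> t * psi_star_integrand \<psi>A \<sigma>A \<psi>B \<sigma>B t"
    using rt by (simp add: psi_star_integrand_def max_mult_distrib_left)
qed

lemma neighbor_function_psi_star:
  fixes \<psi>A \<psi>B :: "real \<Rightarrow> real"
  assumes A: "neighbor_function \<psi>A" and "neighbor_function \<psi>B" and "0 < \<sigma>A" "0 < \<sigma>B"
  shows "neighbor_function (psi_star \<psi>A \<sigma>A \<psi>B \<sigma>B)"
proof -
  have "neighbor_function (\<lambda>x. integral {0..x} (psi_star_integrand \<psi>A \<sigma>A \<psi>B \<sigma>B))"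
  proof (rule neighbor_function_integral)
    show "psi_star_integrand \<psi>A \<sigma>A \<psi>B \<sigma>B integrable_on {0..x}" if "0 \<le> x" for x
      using psi_star_integrand_absolutely_integrable[OF assms order_refl that]
      by (rule set_lebesgue_integral_eq_integral)
    show "antimono_on {0<..} (psi_star_integrand \<psi>A \<sigma>A \<psi>B \<sigma>B)"
      using assms by (intro antimono_psi_star_integrand) (simp_all add: neighbor_function_def)
    show "0 < psi_star_integrand \<psi>A \<sigma>A \<psi>B \<sigma>B s" if "0 < s" for s
      using A \<open>0 < \<sigma>A\<close> that by (rule psi_star_integrand_pos)
    show "mono_on {0<..} (\<lambda>s. s * psi_star_integrand \<psi>A \<sigma>A \<psi>B \<sigma>B s)"
      using assms by (rule mono_on_mult_psi_star_integrand)
  qed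
  then show ?thesis
    using neighbor_function_cong[of "psi_star \<psi>A \<sigma>A \<psi>B \<sigma>B"] psi_star_eq_integral[OF assms]
    by simp
qed

lemma psi_star_increment_ge:
  fixes \<psi>A \<psi>B :: "real \<Rightarrow> real"
  assumes A: "neighbor_function \<psi>A" and B: "neighbor_function \<psi>B" and "0 < \<sigma>A" "0 < \<sigma>B"
    and "0 \<le> x" "x \<le> y"
  shows "(\<psi>A y - \<psi>A x) / \<sigma>A \<le> psi_star \<psi>A \<sigma>A \<psi>B \<sigma>B y - psi_star \<psi>A \<sigma>A \<psi>B \<sigma>B x"
proof -
  let ?g = "psi_star_integrand \<psi>A \<sigma>A \<psi>B \<sigma>B"
  have int_A: "((\<lambda>s. left_deriv \<psi>A s / \<sigma>A) has_integral (\<psi>A y - \<psi>A x) / \<sigma>A) {x..y}"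
    using neighbor_function_has_integral_left_deriv[OF A assms(5,6)] by (rule has_integral_divide)
  have int_g: "?g integrable_on {a..y}" if "0 \<le> a" "a \<le> y" for a
    using psi_star_integrand_absolutely_integrable[OF A B assms(3,4) that]
    by (rule set_lebesgue_integral_eq_integral)
  have "(\<psi>A y - \<psi>A x) / \<sigma>A \<le> integral {x..y} ?g"
    by (rule has_integral_le[OF int_A integrable_integral[OF int_g[OF assms(5,6)]]])
      (simp add: psi_star_integrand_def)
  also have "\<dots> = integral {0..y} ?g - integral {0..x} ?g"
    using int_g[of 0] assms(5,6) by (intro integral_Icc_diff[symmetric]) auto
  finally show ?thesis
    using psi_star_eq_integral[OF A B assms(3,4)] assms(5,6) by simp
qed

lemma psi_star_commute: "psi_star \<psi>A \<sigma>A \<psi>B \<sigma>B = psi_star \<psi>B \<sigma>B \<psi>A \<sigma>A"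
  by (simp add: psi_star_def[abs_def] max.commute)

lemma uncertainty_interval_psi_star_subset:
  fixes \<psi>A \<psi>B :: "real \<Rightarrow> real"
  assumes A: "neighbor_function \<psi>A" and "neighbor_function \<psi>B" and "0 < \<sigma>A" "0 < \<sigma>B"
    and "0 \<le> x"
  shows "uncertainty_interval (psi_star \<psi>A \<sigma>A \<psi>B \<sigma>B) 1 x \<subseteq> uncertainty_interval \<psi>A \<sigma>A x"
proof (rule uncertainty_interval_subset)
  have "neighbor_function (psi_star \<psi>A \<sigma>A \<psi>B \<sigma>B)"
    using neighbor_function_psi_star[OF assms(1-4)] .
  then show "strict_mono_on {0..} (psi_star \<psi>A \<sigma>A \<psi>B \<sigma>B)"
    "psi_star \<psi>A \<sigma>A \<psi>B \<sigma>B ` {0..} = {psi_star \<psi>A \<sigma>A \<psi>B \<sigma>B 0..}"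
    by (simp_all add: neighbor_function_def neighbor_function_image)
  show "strict_mono_on {0..} \<psi>A" "\<psi>A ` {0..} = {\<psi>A 0..}"
    using A by (simp_all add: neighbor_function_def neighbor_function_image)
  show "(\<psi>A y - \<psi>A x) / \<sigma>A \<le> (psi_star \<psi>A \<sigma>A \<psi>B \<sigma>B y - psi_star \<psi>A \<sigma>A \<psi>B \<sigma>B x) / 1"
    if "0 \<le> x" "x \<le> y" for x y
    using psi_star_increment_ge[OF assms(1-4) that] by simp
qed (use assms in simp_all)

theorem theorem5p8:
  fixes \<psi>A \<psi>B :: "real \<Rightarrow> real" and \<sigma>A \<sigma>B :: real
  assumes "neighbor_function \<psi>A" and "neighbor_function \<psi>B"
    and "\<sigma>A > 0" and "\<sigma>B > 0"
  shows "C1_ae \<psi>A \<and> C1_ae \<psi>B \<and>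
         neighbor_function (psi_star \<psi>A \<sigma>A \<psi>B \<sigma>B) \<and>
         (\<forall>x\<ge>0. uncertainty_interval (psi_star \<psi>A \<sigma>A \<psi>B \<sigma>B) 1 x \<subseteq> uncertainty_interval \<psi>A \<sigma>A x
               \<and> uncertainty_interval (psi_star \<psi>A \<sigma>A \<psi>B \<sigma>B) 1 x \<subseteq> uncertainty_interval \<psi>B \<sigma>B x)"
proof (intro conjI allI impI)
  show "C1_ae \<psi>A" "C1_ae \<psi>B"
    using assms(1,2) by (simp_all add: neighbor_function_def C1_ae_if_concave)
  show "neighbor_function (psi_star \<psi>A \<sigma>A \<psi>B \<sigma>B)"
    using neighbor_function_psi_star[OF assms] .
  fix x :: real
  assume "0 \<le> x"
  show "uncertainty_interval (psi_star \<psi>A \<sigma>A \<psi>B \<sigma>B) 1 x \<subseteq> uncertainty_interval \<psi>A \<sigma>A x"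
    using uncertainty_interval_psi_star_subset[OF assms \<open>0 \<le> x\<close>] .
  show "uncertainty_interval (psi_star \<psi>A \<sigma>A \<psi>B \<sigma>B) 1 x \<subseteq> uncertainty_interval \<psi>B \<sigma>B x"
    using uncertainty_interval_psi_star_subset[OF assms(2,1,4,3) \<open>0 \<le> x\<close>]
    by (simp add: psi_star_commute)
qed

end
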